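(* Let $X$ and $Y$ be $\mathbb{R}^n$-valued random variables on the same probability space. Suppose $Y$ is centered Gaussian and there are $c_X,C_X>0$ and $m_X\in\mathbb{R}^n$ such that $X$ has a Lebesgue density $p_X$ with $p_X(x)\le C_Xe^{-c_X|x-m_X|^2}$ for all $x\in\mathbb{R}^n$. Then there is $C>0$ such that for each $a\in\mathbb{R}^n$, $$\mathbb{E}\big[e^{-|X-Y-a|^2}\big]\le Ce^{-\frac{c_X}{C}|a-m_X|^2}.$$ *)

theory Defs
  imports "HOL-Probability.Probability"
begin

text \<open>A centered Gaussian random vector (possibly degenerate): every linear
functional of it is either a centered normal random variable with positive
variance or almost surely zero (centered Gaussian with variance 0).\<close>
definition centered_gaussian_vec :: "'s measure \<Rightarrow> ('s \<Rightarrow> 'a::euclidean_space) \<Rightarrow> bool" where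
  "centered_gaussian_vec M Y \<longleftrightarrow>
     Y \<in> borel_measurable M \<and>
     (\<forall>u::'a. (\<exists>\<sigma>>0. distributed M lborel (\<lambda>\<omega>. u \<bullet> Y \<omega>)
                               (\<lambda>x. ennreal (normal_density 0 \<sigma> x)))
             \<or> (AE \<omega> in M. u \<bullet> Y \<omega> = 0))"

end

theory Submission
  imports Defs
begin

(* Put rho = |a - m|^2 / 9.  If |x - y - a|^2 < rho, the triangle inequality forces
   |y|^2 >= rho or |x - m|^2 >= rho, so for all s, t >= 0
     exp (-|x - y - a|^2) <= exp (t (|y|^2 - rho)) + exp (s (|x - m|^2 - rho)) + exp (-rho).
   Taking expectations (exponential Chebyshev), E exp (-|X - Y - a|^2) decays like
   exp (-min s t 1 * rho) as soon as E exp (s |X - m|^2) and E exp (t |Y|^2) are finite.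
   The density bound gives the first for s = c_X / 2.  For the second, each coordinate of Y
   is normal or almost surely zero, hence has a finite exponential square moment, and Jensen's
   inequality bounds exp (t |y|^2) by the mean of the exp (n t y_b^2) over the n coordinates. *)

lemma norm_power2_eq_sum_inner_Basis:
  "(norm (x::'a::euclidean_space))\<^sup>2 = (\<Sum>b\<in>Basis. (x \<bullet> b)\<^sup>2)"
  unfolding power2_norm_eq_inner by (subst euclidean_inner) (simp add: power2_eq_square)

lemma nn_integral_normal_density:
  "\<sigma> > 0 \<Longrightarrow> (\<integral>\<^sup>+x. ennreal (normal_density \<mu> \<sigma> x) \<partial>lborel) = 1"
  by (subst nn_integral_eq_integral) auto

lemma nn_integral_exp_neg_square:
  assumes "k > 0"
  shows "(\<integral>\<^sup>+t. ennreal (exp (- k * t\<^sup>2)) \<partial>lborel) = ennreal (sqrt (pi / k))"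
proof -
  have "exp (- k * t\<^sup>2) = sqrt (pi / k) * normal_density 0 (sqrt (1 / (2 * k))) t" for t
    using assms by (simp add: normal_density_def real_sqrt_divide field_simps)
  then have "(\<integral>\<^sup>+t. ennreal (exp (- k * t\<^sup>2)) \<partial>lborel)
      = (\<integral>\<^sup>+t. ennreal (sqrt (pi / k)) * ennreal (normal_density 0 (sqrt (1 / (2 * k))) t) \<partial>lborel)"
    using assms by (simp add: ennreal_mult)
  also have "\<dots> = ennreal (sqrt (pi / k))"
    using assms by (simp add: nn_integral_cmult nn_integral_normal_density)
  finally show ?thesis .
qed

lemma nn_integral_exp_neg_norm_square_finite:
  assumes "k > 0"
  shows "(\<integral>\<^sup>+(x::'a::euclidean_space). ennreal (exp (- k * (norm x)\<^sup>2)) \<partial>lborel) < \<top>"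
proof -
  have "ennreal (exp (- k * (norm x)\<^sup>2)) = (\<Prod>b\<in>Basis. ennreal (exp (- k * (x \<bullet> b)\<^sup>2)))"
    for x :: 'a
    by (simp add: norm_power2_eq_sum_inner_Basis sum_distrib_left exp_sum prod_ennreal)
  then have "(\<integral>\<^sup>+(x::'a). ennreal (exp (- k * (norm x)\<^sup>2)) \<partial>lborel)
      = (\<Prod>b\<in>(Basis::'a set). \<integral>\<^sup>+t. ennreal (exp (- k * t\<^sup>2)) \<partial>lborel)"
    by (simp only:) (rule nn_integral_lborel_prod; simp)
  also have "\<dots> < \<top>"
    using nn_integral_exp_neg_square[OF assms] by (simp add: power_less_top_ennreal)
  finally show ?thesis .
qed

lemma nn_integral_lborel_translate:
  fixes m :: "'a::euclidean_space"
  assumes [measurable]: "f \<in> borel_measurable borel"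
  shows "(\<integral>\<^sup>+x. f (x - m) \<partial>lborel) = (\<integral>\<^sup>+x. f x \<partial>lborel)"
proof -
  have "(\<integral>\<^sup>+x. f (x - m) \<partial>lborel) = (\<integral>\<^sup>+x. f (x - m) \<partial>distr lborel borel ((+) m))"
    by (simp add: lborel_distr_plus)
  also have "\<dots> = (\<integral>\<^sup>+x. f x \<partial>lborel)"
    by (subst nn_integral_distr) auto
  finally show ?thesis .
qed

lemma exp_square_moment_of_gaussian_bounded_density:
  fixes X :: "'s \<Rightarrow> 'a::euclidean_space"
  assumes X: "distributed M lborel X (\<lambda>x. ennreal (p x))"
    and "c > 0"
    and p: "\<And>x. p x \<le> K * exp (- c * (norm (x - m))\<^sup>2)"
  shows "(\<integral>\<^sup>+\<omega>. ennreal (exp (c / 2 * (norm (X \<omega> - m))\<^sup>2)) \<partial>M) < \<top>"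
proof -
  have "(\<integral>\<^sup>+\<omega>. ennreal (exp (c / 2 * (norm (X \<omega> - m))\<^sup>2)) \<partial>M)
      = (\<integral>\<^sup>+x. ennreal (p x) * ennreal (exp (c / 2 * (norm (x - m))\<^sup>2)) \<partial>lborel)"
    by (rule distributed_nn_integral[OF X, symmetric]) simp
  also have "\<dots> \<le> (\<integral>\<^sup>+x. ennreal K * ennreal (exp (- c / 2 * (norm (x - m))\<^sup>2)) \<partial>lborel)"
  proof (intro nn_integral_mono)
    fix x
    have "p x * exp (c / 2 * (norm (x - m))\<^sup>2) \<le> K * exp (- c / 2 * (norm (x - m))\<^sup>2)"
      using mult_right_mono[OF p[of x], of "exp (c / 2 * (norm (x - m))\<^sup>2)"]
      by (simp add: mult.assoc flip: exp_add)
    then show "ennreal (p x) * ennreal (exp (c / 2 * (norm (x - m))\<^sup>2))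
        \<le> ennreal K * ennreal (exp (- c / 2 * (norm (x - m))\<^sup>2))"
      by (metis ennreal_leI ennreal_mult'' exp_ge_zero)
  qed
  also have "\<dots> = ennreal K * (\<integral>\<^sup>+(x::'a). ennreal (exp (- c / 2 * (norm x)\<^sup>2)) \<partial>lborel)"
    using nn_integral_lborel_translate[of "\<lambda>x. ennreal (exp (- c / 2 * (norm x)\<^sup>2))" m]
    by (simp add: nn_integral_cmult)
  also have "\<dots> < \<top>"
    using nn_integral_exp_neg_norm_square_finite[of "c / 2", where 'a='a] \<open>c > 0\<close>
    by (simp add: ennreal_mult_less_top)
  finally show ?thesis .
qed

lemma normal_exp_square_moment_finite:
  assumes "\<sigma> > 0" and Z: "distributed M lborel Z (\<lambda>x. ennreal (normal_density 0 \<sigma> x))"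
  shows "(\<integral>\<^sup>+\<omega>. ennreal (exp ((Z \<omega>)\<^sup>2 / (4 * \<sigma>\<^sup>2))) \<partial>M) < \<top>"
proof -
  have density_times_exp: "normal_density 0 \<sigma> x * exp (x\<^sup>2 / (4 * \<sigma>\<^sup>2))
      = 1 / sqrt (2 * pi * \<sigma>\<^sup>2) * exp (- (1 / (4 * \<sigma>\<^sup>2)) * (norm x)\<^sup>2)" for x :: real
  proof -
    have "- x\<^sup>2 / (2 * \<sigma>\<^sup>2) + x\<^sup>2 / (4 * \<sigma>\<^sup>2) = - (1 / (4 * \<sigma>\<^sup>2)) * (norm x)\<^sup>2"
      using assms by (simp add: field_simps)
    then show ?thesis
      unfolding normal_density_def by (simp add: mult.assoc flip: exp_add)
  qed
  have "(\<integral>\<^sup>+\<omega>. ennreal (exp ((Z \<omega>)\<^sup>2 / (4 * \<sigma>\<^sup>2))) \<partial>M)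
      = (\<integral>\<^sup>+x. ennreal (normal_density 0 \<sigma> x) * ennreal (exp (x\<^sup>2 / (4 * \<sigma>\<^sup>2))) \<partial>lborel)"
    by (rule distributed_nn_integral[OF Z, symmetric]) simp
  also have "\<dots> = (\<integral>\<^sup>+(x::real). ennreal (1 / sqrt (2 * pi * \<sigma>\<^sup>2))
      * ennreal (exp (- (1 / (4 * \<sigma>\<^sup>2)) * (norm x)\<^sup>2)) \<partial>lborel)"
    by (intro nn_integral_cong) (metis density_times_exp ennreal_mult'' exp_ge_zero)
  also have "\<dots> = ennreal (1 / sqrt (2 * pi * \<sigma>\<^sup>2))
      * (\<integral>\<^sup>+(x::real). ennreal (exp (- (1 / (4 * \<sigma>\<^sup>2)) * (norm x)\<^sup>2)) \<partial>lborel)"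
    by (rule nn_integral_cmult) simp
  also have "\<dots> < \<top>"
    using nn_integral_exp_neg_norm_square_finite[of "1 / (4 * \<sigma>\<^sup>2)", where 'a=real] assms
    by (simp add: ennreal_mult_less_top)
  finally show ?thesis .
qed

lemma centered_gaussian_vec_exp_square_moment_inner:
  assumes "prob_space M" and "centered_gaussian_vec M Y"
  shows "\<exists>t>0. (\<integral>\<^sup>+\<omega>. ennreal (exp (t * (u \<bullet> Y \<omega>)\<^sup>2)) \<partial>M) < \<top>"
proof -
  from assms(2) have "(\<exists>\<sigma>>0. distributed M lborel (\<lambda>\<omega>. u \<bullet> Y \<omega>) (\<lambda>x. ennreal (normal_density 0 \<sigma> x)))
      \<or> (AE \<omega> in M. u \<bullet> Y \<omega> = 0)"
    unfolding centered_gaussian_vec_def by blast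
  then show ?thesis
  proof
    assume "\<exists>\<sigma>>0. distributed M lborel (\<lambda>\<omega>. u \<bullet> Y \<omega>) (\<lambda>x. ennreal (normal_density 0 \<sigma> x))"
    then obtain \<sigma> where "\<sigma> > 0"
      and "distributed M lborel (\<lambda>\<omega>. u \<bullet> Y \<omega>) (\<lambda>x. ennreal (normal_density 0 \<sigma> x))"
      by blast
    then show ?thesis
      by (intro exI[of _ "1 / (4 * \<sigma>\<^sup>2)"]) (auto dest!: normal_exp_square_moment_finite)
  next
    assume "AE \<omega> in M. u \<bullet> Y \<omega> = 0"
    then have "(\<integral>\<^sup>+\<omega>. ennreal (exp (1 * (u \<bullet> Y \<omega>)\<^sup>2)) \<partial>M) = emeasure M (space M)"
      by (subst nn_integral_cong_AE[where v="\<lambda>_. 1"]) auto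
    then show ?thesis
      using prob_space.emeasure_space_1[OF assms(1)] by (intro exI[of _ 1]) auto
  qed
qed

lemma exp_norm_square_le_mean_exp_inner_square:
  fixes y :: "'a::euclidean_space" and t :: real
  shows "exp (t * (norm y)\<^sup>2) \<le> (\<Sum>b\<in>Basis. exp (real DIM('a) * t * (y \<bullet> b)\<^sup>2)) / real DIM('a)"
proof -
  have "exp (t * (norm y)\<^sup>2) = exp (\<Sum>b\<in>Basis. (1 / real DIM('a)) *\<^sub>R (real DIM('a) * t * (y \<bullet> b)\<^sup>2))"
    by (simp add: norm_power2_eq_sum_inner_Basis sum_distrib_left)
  also have "\<dots> \<le> (\<Sum>b\<in>Basis. (1 / real DIM('a)) * exp (real DIM('a) * t * (y \<bullet> b)\<^sup>2))"
    by (rule convex_on_sum[OF _ _ exp_convex]) auto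
  also have "\<dots> = (\<Sum>b\<in>Basis. exp (real DIM('a) * t * (y \<bullet> b)\<^sup>2)) / real DIM('a)"
    by (simp add: sum_divide_distrib)
  finally show ?thesis .
qed

lemma centered_gaussian_vec_exp_square_moment:
  fixes Y :: "'s \<Rightarrow> 'a::euclidean_space"
  assumes "prob_space M" and Y: "centered_gaussian_vec M Y"
  shows "\<exists>t>0. (\<integral>\<^sup>+\<omega>. ennreal (exp (t * (norm (Y \<omega>))\<^sup>2)) \<partial>M) < \<top>"
proof -
  have [measurable]: "Y \<in> borel_measurable M"
    using Y unfolding centered_gaussian_vec_def by blast
  obtain \<tau> where \<tau>: "\<And>b. b \<in> Basis \<Longrightarrow> \<tau> b > 0"
    and moment: "\<And>b. b \<in> Basis \<Longrightarrow> (\<integral>\<^sup>+\<omega>. ennreal (exp (\<tau> b * (b \<bullet> Y \<omega>)\<^sup>2)) \<partial>M) < \<top>"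
    using centered_gaussian_vec_exp_square_moment_inner[OF assms] by metis
  define T where "T = Min (\<tau> ` Basis)"
  have "T > 0" and T_le: "\<And>b. b \<in> Basis \<Longrightarrow> T \<le> \<tau> b"
    using \<tau> by (auto simp: T_def)
  have "(\<integral>\<^sup>+\<omega>. ennreal (exp (T / real DIM('a) * (norm (Y \<omega>))\<^sup>2)) \<partial>M)
      \<le> (\<integral>\<^sup>+\<omega>. (\<Sum>b\<in>Basis. ennreal (exp (T * (b \<bullet> Y \<omega>)\<^sup>2))) \<partial>M)"
  proof (intro nn_integral_mono)
    fix \<omega>
    have "exp (T / real DIM('a) * (norm (Y \<omega>))\<^sup>2) \<le> (\<Sum>b\<in>Basis. exp (T * (Y \<omega> \<bullet> b)\<^sup>2)) / real DIM('a)"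
      using exp_norm_square_le_mean_exp_inner_square[of "T / real DIM('a)" "Y \<omega>"] by simp
    also have "\<dots> \<le> (\<Sum>b\<in>Basis. exp (T * (b \<bullet> Y \<omega>)\<^sup>2))"
      using sum_nonneg[of Basis "\<lambda>b. exp (T * (b \<bullet> Y \<omega>)\<^sup>2)"]
      by (simp add: divide_le_eq inner_commute mult_le_cancel_left1)
    finally show "ennreal (exp (T / real DIM('a) * (norm (Y \<omega>))\<^sup>2))
        \<le> (\<Sum>b\<in>Basis. ennreal (exp (T * (b \<bullet> Y \<omega>)\<^sup>2)))"
      by (simp add: ennreal_leI)
  qed
  also have "\<dots> = (\<Sum>b\<in>Basis. \<integral>\<^sup>+\<omega>. ennreal (exp (T * (b \<bullet> Y \<omega>)\<^sup>2)) \<partial>M)"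
    by (rule nn_integral_sum) measurable
  also have "\<dots> \<le> (\<Sum>b\<in>Basis. \<integral>\<^sup>+\<omega>. ennreal (exp (\<tau> b * (b \<bullet> Y \<omega>)\<^sup>2)) \<partial>M)"
    using T_le by (intro sum_mono nn_integral_mono ennreal_leI) (simp add: mult_right_mono)
  also have "\<dots> < \<top>"
    using moment by simp
  finally show ?thesis
    using \<open>T > 0\<close> by (intro exI[of _ "T / real DIM('a)"]) simp
qed

lemma exp_neg_norm_square_le_tails:
  fixes x y a m :: "'a::real_normed_vector"
  assumes "s \<ge> 0" "t \<ge> 0"
  defines "\<rho> \<equiv> (norm (a - m))\<^sup>2 / 9"
  shows "exp (- (norm (x - y - a))\<^sup>2)
    \<le> exp (t * ((norm y)\<^sup>2 - \<rho>)) + exp (s * ((norm (x - m))\<^sup>2 - \<rho>)) + exp (- \<rho>)"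
proof -
  have "exp (- (norm (x - y - a))\<^sup>2) \<le> 1"
    by simp
  moreover have "exp (- (norm (x - y - a))\<^sup>2) \<le> exp (- \<rho>)"
    if "(norm y)\<^sup>2 < \<rho>" "(norm (x - m))\<^sup>2 < \<rho>"
  proof -
    have \<rho>_eq: "\<rho> = (norm (a - m) / 3)\<^sup>2"
      by (simp add: \<rho>_def power_divide)
    have "norm y < norm (a - m) / 3"
      using that(1) unfolding \<rho>_eq by (rule power_less_imp_less_base) simp
    moreover have "norm (x - m) < norm (a - m) / 3"
      using that(2) unfolding \<rho>_eq by (rule power_less_imp_less_base) simp
    moreover have "norm (a - m) \<le> norm (x - m) + norm y + norm (x - y - a)"
      using norm_triangle_ineq4[of "x - m" y] norm_triangle_ineq4[of "x - m - y" "x - y - a"]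
      by (simp add: algebra_simps)
    ultimately have "norm (a - m) / 3 \<le> norm (x - y - a)"
      by linarith
    then show ?thesis
      unfolding \<rho>_eq by (simp add: power_mono)
  qed
  moreover have "1 \<le> exp (t * ((norm y)\<^sup>2 - \<rho>))" if "\<rho> \<le> (norm y)\<^sup>2"
    using that assms by simp
  moreover have "1 \<le> exp (s * ((norm (x - m))\<^sup>2 - \<rho>))" if "\<rho> \<le> (norm (x - m))\<^sup>2"
    using that assms by simp
  ultimately show ?thesis
    by (smt (verit) exp_gt_zero)
qed

lemma nn_integral_exp_mult_diff:
  assumes "f \<in> borel_measurable M"
  shows "(\<integral>\<^sup>+\<omega>. ennreal (exp (t * (f \<omega> - r))) \<partial>M)
       = ennreal (exp (- t * r)) * (\<integral>\<^sup>+\<omega>. ennreal (exp (t * f \<omega>)) \<partial>M)"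
proof -
  have "exp (t * (f \<omega> - r)) = exp (- t * r) * exp (t * f \<omega>)" for \<omega>
    by (simp add: algebra_simps flip: exp_add)
  then have "ennreal (exp (t * (f \<omega> - r))) = ennreal (exp (- t * r)) * ennreal (exp (t * f \<omega>))" for \<omega>
    by (metis ennreal_mult'' exp_ge_zero)
  then show ?thesis
    using assms by (simp add: nn_integral_cmult)
qed

lemma expectation_exp_neg_norm_diff_decay:
  fixes X Y :: "'s \<Rightarrow> 'a::euclidean_space"
  assumes "prob_space M"
    and [measurable]: "X \<in> borel_measurable M" "Y \<in> borel_measurable M"
    and "s > 0" "t > 0"
    and X: "(\<integral>\<^sup>+\<omega>. ennreal (exp (s * (norm (X \<omega> - m))\<^sup>2)) \<partial>M) < \<top>"
    and Y: "(\<integral>\<^sup>+\<omega>. ennreal (exp (t * (norm (Y \<omega>))\<^sup>2)) \<partial>M) < \<top>"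
  shows "\<exists>K>0. \<exists>c>0. \<forall>a. prob_space.expectation M (\<lambda>\<omega>. exp (- (norm (X \<omega> - Y \<omega> - a))\<^sup>2))
           \<le> K * exp (- c * (norm (a - m))\<^sup>2)"
proof -
  interpret prob_space M by fact
  obtain IX where "IX \<ge> 0" and IX: "(\<integral>\<^sup>+\<omega>. ennreal (exp (s * (norm (X \<omega> - m))\<^sup>2)) \<partial>M) = ennreal IX"
    using X by (auto simp: less_top_ennreal)
  obtain IY where "IY \<ge> 0" and IY: "(\<integral>\<^sup>+\<omega>. ennreal (exp (t * (norm (Y \<omega>))\<^sup>2)) \<partial>M) = ennreal IY"
    using Y by (auto simp: less_top_ennreal)
  define c where "c = min (min s t) 1"
  have "c > 0"
    using assms by (simp add: c_def)
  have "expectation (\<lambda>\<omega>. exp (- (norm (X \<omega> - Y \<omega> - a))\<^sup>2))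
      \<le> (IX + IY + 1) * exp (- (c / 9) * (norm (a - m))\<^sup>2)" for a
  proof -
    define \<rho> where "\<rho> = (norm (a - m))\<^sup>2 / 9"
    have "\<rho> \<ge> 0"
      by (simp add: \<rho>_def)
    have "(\<integral>\<^sup>+\<omega>. ennreal (exp (- (norm (X \<omega> - Y \<omega> - a))\<^sup>2)) \<partial>M)
        \<le> (\<integral>\<^sup>+\<omega>. ennreal (exp (t * ((norm (Y \<omega>))\<^sup>2 - \<rho>)))
              + ennreal (exp (s * ((norm (X \<omega> - m))\<^sup>2 - \<rho>))) + ennreal (exp (- \<rho>)) \<partial>M)"
      using \<open>s > 0\<close> \<open>t > 0\<close> unfolding \<rho>_def
      by (intro nn_integral_mono) (simp add: exp_neg_norm_square_le_tails flip: ennreal_plus)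
    also have "\<dots> = ennreal (exp (- t * \<rho>)) * ennreal IY + ennreal (exp (- s * \<rho>)) * ennreal IX
        + ennreal (exp (- \<rho>))"
      by (simp add: nn_integral_add nn_integral_exp_mult_diff emeasure_space_1 IX IY)
    also have "\<dots> \<le> ennreal ((IX + IY + 1) * exp (- c * \<rho>))"
    proof -
      have "exp (- t * \<rho>) \<le> exp (- c * \<rho>)" "exp (- s * \<rho>) \<le> exp (- c * \<rho>)"
        "exp (- \<rho>) \<le> exp (- c * \<rho>)"
        using \<open>\<rho> \<ge> 0\<close> \<open>c > 0\<close>
        by (simp_all add: c_def mult_right_mono mult_left_le_one_le)
      then have "exp (- t * \<rho>) * IY + exp (- s * \<rho>) * IX + exp (- \<rho>) \<le> (IX + IY + 1) * exp (- c * \<rho>)"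
        using \<open>IX \<ge> 0\<close> \<open>IY \<ge> 0\<close> by (simp add: algebra_simps add_mono mult_left_mono)
      then show ?thesis
        using \<open>IX \<ge> 0\<close> \<open>IY \<ge> 0\<close> by (simp add: ennreal_leI flip: ennreal_mult'' ennreal_plus)
    qed
    finally show ?thesis
      using \<open>IX \<ge> 0\<close> \<open>IY \<ge> 0\<close> by (intro integral_real_bounded) (simp_all add: \<rho>_def)
  qed
  moreover have "IX + IY + 1 > 0" "c / 9 > 0"
    using \<open>IX \<ge> 0\<close> \<open>IY \<ge> 0\<close> \<open>c > 0\<close> by simp_all
  ultimately show ?thesis
    by blast
qed

lemma exp_decay_bound_rescale:
  fixes f g :: "'a \<Rightarrow> real"
  assumes "K > 0" "c > 0" "d > 0"
    and bound: "\<And>a. f a \<le> K * exp (- c * g a)" and "\<And>a. g a \<ge> 0"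
  shows "\<exists>C>0. \<forall>a. f a \<le> C * exp (- (d / C) * g a)"
proof (intro exI[of _ "max K (d / c)"] conjI allI)
  fix a
  have "d / max K (d / c) \<le> c"
    using assms(1-3) by (simp add: divide_le_eq max_def field_simps)
  then have "d / max K (d / c) * g a \<le> c * g a"
    using assms(5)[of a] by (rule mult_right_mono)
  then have "exp (- c * g a) \<le> exp (- (d / max K (d / c)) * g a)"
    by simp
  then have "K * exp (- c * g a) \<le> max K (d / c) * exp (- (d / max K (d / c)) * g a)"
    using \<open>K > 0\<close> by (intro mult_mono) auto
  then show "f a \<le> max K (d / c) * exp (- (d / max K (d / c)) * g a)"
    using bound[of a] by linarith
qed (use assms in simp)

theorem lemma5p1:
  fixes M :: "'s measure" and X Y :: "'s \<Rightarrow> 'a::euclidean_space"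
    and pX :: "'a \<Rightarrow> real" and cX CX :: real and mX :: 'a
  assumes "prob_space M"
    and "centered_gaussian_vec M Y"
    and "distributed M lborel X (\<lambda>x. ennreal (pX x))"
    and "\<forall>x. 0 \<le> pX x"
    and "cX > 0" and "CX > 0"
    and "\<forall>x. pX x \<le> CX * exp (- cX * (norm (x - mX))\<^sup>2)"
  shows "\<exists>C>0. \<forall>a::'a.
           prob_space.expectation M (\<lambda>\<omega>. exp (- (norm (X \<omega> - Y \<omega> - a))\<^sup>2))
             \<le> C * exp (- (cX / C) * (norm (a - mX))\<^sup>2)"
proof -
  have "X \<in> borel_measurable M"
    using distributed_measurable[OF assms(3)] by simp
  moreover have "Y \<in> borel_measurable M"
    using assms(2) unfolding centered_gaussian_vec_def by blast
  moreover have "(\<integral>\<^sup>+\<omega>. ennreal (exp (cX / 2 * (norm (X \<omega> - mX))\<^sup>2)) \<partial>M) < \<top>"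
    using assms(3,5,7) by (intro exp_square_moment_of_gaussian_bounded_density) auto
  moreover obtain t where "t > 0" "(\<integral>\<^sup>+\<omega>. ennreal (exp (t * (norm (Y \<omega>))\<^sup>2)) \<partial>M) < \<top>"
    using centered_gaussian_vec_exp_square_moment[OF assms(1,2)] by blast
  ultimately obtain K c where "K > 0" "c > 0" and bound:
    "\<And>a. prob_space.expectation M (\<lambda>\<omega>. exp (- (norm (X \<omega> - Y \<omega> - a))\<^sup>2))
       \<le> K * exp (- c * (norm (a - mX))\<^sup>2)"
    using expectation_exp_neg_norm_diff_decay[OF assms(1), of X Y "cX / 2" t mX] assms(5) by auto
  show ?thesis
    using exp_decay_bound_rescale[OF \<open>K > 0\<close> \<open>c > 0\<close> \<open>cX > 0\<close> bound] by simp
qed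

end
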